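(* Let $d\ge 1$ and $n\ge 2$ be integers, $\kappa_d$ the volume of the $d$-dimensional unit ball, $V>0$, $-d/2<\tau_1<\dots<\tau_n$ reals, $a_i=\tau_i+d$ for $i\in[n]$, $b=\sum_{k=1}^n\prod_{l\in[n]\setminus\{k\}}a_l^2$ and $P=\prod_{k=1}^n a_k^2$. Let $\Sigma_n$ have entries $(\Sigma_n)_{ij}=\frac{Vd^2\kappa_d^2}{a_ia_j}$, let $\lambda_1=0$, $\lambda_2=Vd^2\kappa_d^2\sum_{i=1}^n a_i^{-2}$, and let $D=\operatorname{diag}(\lambda_1,\dots,\lambda_1,\lambda_2)\in\mathbb{R}^{n\times n}$. Let $S\in\mathbb{R}^{n\times n}$ have columns $v_1,\dots,v_n$, where $v_k=\frac{a_1}{a_{k+1}}e_1-e_{k+1}$ for $k=1,\dots,n-1$ ($e_i$ the standard basis vectors) and $v_n=(a_n/a_1,\dots,a_n/a_{n-1},1)^t$. Then $S$ is invertible, $\Sigma_n$ is similar to $D$ with $D=S^{-1}\Sigma_nS$, and $S^{-1}=(\tilde s_{ij})$ has entries $$\tilde s_{ij}=\begin{cases}\dfrac{P}{a_ja_nb} & \text{if } i=n,\\[2mm] -\dfrac{\sum_{k\in[n]\setminus\{i+1\}}a_{i+1}^2\prod_{l\in[n]\setminus\{k,i+1\}}a_l^2}{b} & \text{if } i<n,\ j=i+1,\\[2mm] \dfrac{P}{a_{i+1}a_jb} & \text{otherwise.}\end{cases}$$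
   Context: $\Sigma_n$ is the asymptotic covariance matrix of normalized length power functionals of a random geometric graph in the supercritical regime; $V$ is the volume of the window $W$. $[n]=\{1,\dots,n\}$. *)

theory Defs
  imports "HOL-Analysis.Analysis" "Jordan_Normal_Form.Matrix"
begin

text \<open>Matrices are Jordan_Normal_Form matrices with 0-based indices; the paper's
  1-based index i corresponds to row/column index i-1. The sequences a, tau are
  indexed 1-based as functions on nat.\<close>

definition Sigma_mat :: "nat \<Rightarrow> real \<Rightarrow> nat \<Rightarrow> (nat \<Rightarrow> real) \<Rightarrow> real mat" where
  "Sigma_mat n V d a = mat n n (\<lambda>(i,j).
     V * (real d)^2 * (unit_ball_vol (real d))^2 / (a (i+1) * a (j+1)))"

definition D_mat :: "nat \<Rightarrow> real \<Rightarrow> real \<Rightarrow> real mat" where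
  "D_mat n l1 l2 = mat n n (\<lambda>(i,j). if i = j then (if i = n - 1 then l2 else l1) else 0)"

text \<open>S with columns v_1..v_n: v_k = (a_1/a_{k+1}) e_1 - e_{k+1} for k<n,
  v_n = (a_n/a_1, ..., a_n/a_{n-1}, 1)^t. Entry (i,k) (1-based) is the i-th
  component of v_k.\<close>
definition S_mat :: "nat \<Rightarrow> (nat \<Rightarrow> real) \<Rightarrow> real mat" where
  "S_mat n a = mat n n (\<lambda>(i0,k0). let i = i0 + 1; k = k0 + 1 in
     if k < n then (if i = 1 then a 1 / a (k+1) else 0) - (if i = k + 1 then 1 else 0)
     else (if i < n then a n / a i else 1))"

definition S_inv_mat :: "nat \<Rightarrow> (nat \<Rightarrow> real) \<Rightarrow> real \<Rightarrow> real \<Rightarrow> real mat" where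
  "S_inv_mat n a b P = mat n n (\<lambda>(i0,j0). let i = i0 + 1; j = j0 + 1 in
     if i = n then P / (a j * a n * b)
     else if j = i + 1 then
       - (\<Sum>k\<in>{1..n} - {i+1}. (a (i+1))^2 * (\<Prod>l\<in>{1..n} - {k, i+1}. (a l)^2)) / b
     else P / (a (i+1) * a j * b))"

end

theory Submission
  imports Defs "Jordan_Normal_Form.Determinant"
begin

text \<open>
  With \<open>c = V d\<^sup>2 \<kappa>\<^sub>d\<^sup>2\<close> and \<open>u = (1/a\<^sub>1, \<dots>, 1/a\<^sub>n)\<close> we have \<open>\<Sigma>\<^sub>n = c u u\<^sup>T\<close>, a matrix of
  rank one. For \<open>k < n\<close> the column \<open>v\<^sub>k\<close> is orthogonal to \<open>u\<close>, hence lies in the kernel of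
  \<open>\<Sigma>\<^sub>n\<close>, while \<open>v\<^sub>n = a\<^sub>n u\<close> is an eigenvector with eigenvalue \<open>c |u|\<^sup>2 = \<lambda>\<^sub>2\<close>; so
  \<open>\<Sigma>\<^sub>n S = S D\<close>.
  Since \<open>b = P |u|\<^sup>2\<close>, the claimed inverse is \<open>w u\<^sup>T / |u|\<^sup>2 - N\<close>, where
  \<open>w = (1/a\<^sub>2, \<dots>, 1/a\<^sub>n, 1/a\<^sub>n)\<close> and \<open>N\<close> is the upper shift matrix. It maps \<open>v\<^sub>k\<close> to
  \<open>-N v\<^sub>k = e\<^sub>k\<close> for \<open>k < n\<close> and \<open>v\<^sub>n\<close> to \<open>a\<^sub>n (w - N u) = e\<^sub>n\<close>. A left inverse of a
  square matrix is a two-sided inverse, which gives the similarity.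
\<close>

lemma sum_prod_diff1:
  fixes f :: "'a \<Rightarrow> 'b::field"
  assumes "finite A" and "\<And>k. k \<in> A \<Longrightarrow> f k \<noteq> 0"
  shows "(\<Sum>k\<in>A. \<Prod>l\<in>A - {k}. f l) = prod f A * (\<Sum>k\<in>A. 1 / f k)"
  unfolding sum_distrib_left
  by (rule sum.cong) (simp_all add: prod_diff1 assms)

lemma sum_prod_diff2:
  fixes f :: "'a \<Rightarrow> 'b::field"
  assumes "finite A" and "j \<in> A" and "\<And>k. k \<in> A \<Longrightarrow> f k \<noteq> 0"
  shows "(\<Sum>k\<in>A - {j}. f j * (\<Prod>l\<in>A - {k, j}. f l))
           = prod f A * ((\<Sum>k\<in>A. 1 / f k) - 1 / f j)"
proof -
  have "A - {k, j} = (A - {j}) - {k}" for k by auto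
  then have "(\<Sum>k\<in>A - {j}. f j * (\<Prod>l\<in>A - {k, j}. f l))
           = f j * (\<Sum>k\<in>A - {j}. \<Prod>l\<in>(A - {j}) - {k}. f l)"
    by (simp add: sum_distrib_left)
  also have "\<dots> = f j * prod f (A - {j}) * (\<Sum>k\<in>A - {j}. 1 / f k)"
    using sum_prod_diff1[of "A - {j}" f] assms by simp
  also have "\<dots> = prod f A * ((\<Sum>k\<in>A. 1 / f k) - 1 / f j)"
    using assms by (simp add: prod_diff1 sum_diff1)
  finally show ?thesis .
qed

lemma ge_first_if_increasing:
  fixes \<tau> :: "nat \<Rightarrow> 'a::order"
  assumes "\<And>i. 1 \<le> i \<Longrightarrow> i < n \<Longrightarrow> \<tau> i < \<tau> (i + 1)" and "1 \<le> i" and "i \<le> n"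
  shows "\<tau> 1 \<le> \<tau> i"
  using assms(2,3)
proof (induction i rule: dec_induct)
  case (step i)
  then show ?case using assms(1)[of i] by simp
qed simp

lemma left_inverse_imp_invertible_mat:
  fixes S T :: "'a::field mat"
  assumes "S \<in> carrier_mat n n" and "T \<in> carrier_mat n n" and "T * S = 1\<^sub>m n"
  shows "S * T = 1\<^sub>m n" and "inverts_mat S T" and "inverts_mat T S" and "invertible_mat S"
proof -
  show ST: "S * T = 1\<^sub>m n" using mat_mult_left_right_inverse[OF assms(2,1,3)] .
  show "inverts_mat S T" "inverts_mat T S"
    using assms ST by (simp_all add: inverts_mat_def)
  then show "invertible_mat S"
    using assms(1) by (auto simp: invertible_mat_def)
qed

lemma similar_mat_wit_if_left_inverse:
  fixes A D S T :: "'a::field mat"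
  assumes carrier: "A \<in> carrier_mat n n" "D \<in> carrier_mat n n" "S \<in> carrier_mat n n" "T \<in> carrier_mat n n"
    and inv: "T * S = 1\<^sub>m n" and eigen: "A * S = S * D"
  shows "similar_mat_wit A D S T" and "T * A * S = D"
proof -
  have ST: "S * T = 1\<^sub>m n" using left_inverse_imp_invertible_mat(1)[OF carrier(3,4) inv] .
  have "A = (A * S) * T"
    using carrier by (simp add: assoc_mult_mat[of A n n S n T n] ST)
  then show "similar_mat_wit A D S T"
    using carrier inv ST by (intro similar_mat_witI) (simp_all add: eigen)
  have "T * A * S = T * (S * D)"
    using carrier by (simp add: assoc_mult_mat[of T n n A n S n] eigen)
  also have "\<dots> = D"
    using carrier by (simp add: assoc_mult_mat[of T n n S n D n, symmetric] inv)
  finally show "T * A * S = D" .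
qed

lemma index_mult_mat_sum:
  assumes "A \<in> carrier_mat k n" and "B \<in> carrier_mat n m" and "r < k" and "c < m"
  shows "(A * B) $$ (r, c) = (\<Sum>j<n. A $$ (r, j) * B $$ (j, c))"
  using assms by (simp add: scalar_prod_def atLeast0LessThan)

lemma S_mat_index_lt:
  assumes "j < n" and "c + 1 < n"
  shows "S_mat n a $$ (j, c) = (if j = 0 then a 1 / a (c + 2) else 0) - (if j = c + 1 then 1 else 0)"
  using assms by (auto simp: S_mat_def Let_def)

lemma S_mat_index_last:
  assumes "j < n" and "a n \<noteq> 0"
  shows "S_mat n a $$ (j, n - 1) = a n / a (j + 1)"
proof (cases "j + 1 < n")
  case False
  then have "j + 1 = n" using assms(1) by simp
  then show ?thesis using assms by (auto simp: S_mat_def Let_def)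
qed (use assms in \<open>auto simp: S_mat_def Let_def\<close>)

lemma mult_S_mat_index_lt:
  fixes A :: "real mat"
  assumes "A \<in> carrier_mat k n" and "r < k" and c: "c + 1 < n"
  shows "(A * S_mat n a) $$ (r, c) = A $$ (r, 0) * (a 1 / a (c + 2)) - A $$ (r, c + 1)"
proof -
  have "(A * S_mat n a) $$ (r, c) = (\<Sum>j<n. A $$ (r, j) * S_mat n a $$ (j, c))"
    using assms by (intro index_mult_mat_sum) (auto simp: S_mat_def)
  also have "\<dots> = (\<Sum>j<n. (if j = 0 then A $$ (r, j) * (a 1 / a (c + 2)) else 0)
                          - (if j = c + 1 then A $$ (r, j) else 0))"
    using c by (intro sum.cong) (auto simp: S_mat_index_lt)
  also have "\<dots> = A $$ (r, 0) * (a 1 / a (c + 2)) - A $$ (r, c + 1)"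
    using c by (simp add: sum_subtractf)
  finally show ?thesis .
qed

lemma mult_S_mat_index_last:
  fixes A :: "real mat"
  assumes "A \<in> carrier_mat k n" and "r < k" and "0 < n" and "a n \<noteq> 0"
  shows "(A * S_mat n a) $$ (r, n - 1) = (\<Sum>j<n. A $$ (r, j) * (a n / a (j + 1)))"
proof -
  have "(A * S_mat n a) $$ (r, n - 1) = (\<Sum>j<n. A $$ (r, j) * S_mat n a $$ (j, n - 1))"
    using assms by (intro index_mult_mat_sum) (auto simp: S_mat_def)
  also have "\<dots> = (\<Sum>j<n. A $$ (r, j) * (a n / a (j + 1)))"
    using assms S_mat_index_last[of _ n a] by (intro sum.cong) auto
  finally show ?thesis .
qed

lemma mult_D_mat_index:
  fixes A :: "real mat"
  assumes "A \<in> carrier_mat k n" and "r < k" and "c < n"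
  shows "(A * D_mat n l1 l2) $$ (r, c) = A $$ (r, c) * (if c = n - 1 then l2 else l1)"
proof -
  have "(A * D_mat n l1 l2) $$ (r, c) = (\<Sum>j<n. A $$ (r, j) * D_mat n l1 l2 $$ (j, c))"
    using assms by (intro index_mult_mat_sum) (auto simp: D_mat_def)
  also have "\<dots> = (\<Sum>j<n. if j = c then A $$ (r, c) * (if c = n - 1 then l2 else l1) else 0)"
    using assms by (intro sum.cong) (auto simp: D_mat_def)
  finally show ?thesis
    using assms by simp
qed

lemma Sigma_mat_mult_S_mat:
  fixes a :: "nat \<Rightarrow> real"
  assumes nonzero: "\<And>i. 1 \<le> i \<Longrightarrow> i \<le> n \<Longrightarrow> a i \<noteq> 0"
  shows "Sigma_mat n V d a * S_mat n a
           = S_mat n a * D_mat n 0 (V * (real d)^2 * (unit_ball_vol (real d))^2 * (\<Sum>i\<in>{1..n}. 1 / (a i)^2))"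
    (is "?\<Sigma> * ?S = ?S * D_mat n 0 (?c * ?W)")
proof (rule eq_matI)
  have carrier: "?\<Sigma> \<in> carrier_mat n n" "?S \<in> carrier_mat n n"
    by (simp_all add: Sigma_mat_def S_mat_def)
  fix r c
  assume "r < dim_row (?S * D_mat n 0 (?c * ?W))" and "c < dim_col (?S * D_mat n 0 (?c * ?W))"
  then have r: "r < n" and c: "c < n"
    by (simp_all add: S_mat_def D_mat_def)
  have \<Sigma>: "?\<Sigma> $$ (r, j) = ?c / (a (r + 1) * a (j + 1))" if "j < n" for j
    using r that by (simp add: Sigma_mat_def)
  have ar: "a (r + 1) \<noteq> 0" using nonzero r by simp
  have "0 < n" using r by simp
  note SD_index = mult_D_mat_index[OF carrier(2) r c]
  show "(?\<Sigma> * ?S) $$ (r, c) = (?S * D_mat n 0 (?c * ?W)) $$ (r, c)"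
  proof (cases "c + 1 < n")
    case True
    have "a 1 \<noteq> 0" "a (c + 2) \<noteq> 0" using nonzero True by auto
    have "(?\<Sigma> * ?S) $$ (r, c) = ?\<Sigma> $$ (r, 0) * (a 1 / a (c + 2)) - ?\<Sigma> $$ (r, c + 1)"
      using carrier(1) r True by (rule mult_S_mat_index_lt)
    also have "\<dots> = 0"
      using True r \<open>a 1 \<noteq> 0\<close> \<open>a (c + 2) \<noteq> 0\<close> ar by (simp add: \<Sigma>)
    finally show ?thesis
      unfolding SD_index using True by simp
  next
    case False
    then have c_last: "c = n - 1" using c by simp
    have "(?\<Sigma> * ?S) $$ (r, c) = (\<Sum>j<n. ?\<Sigma> $$ (r, j) * (a n / a (j + 1)))"
      unfolding c_last using carrier(1) r \<open>0 < n\<close> nonzero by (intro mult_S_mat_index_last) auto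
    also have "\<dots> = (\<Sum>j<n. ?c * a n / a (r + 1) * (1 / (a (j + 1))^2))"
      using nonzero by (intro sum.cong) (auto simp: \<Sigma> power2_eq_square)
    also have "\<dots> = ?c * a n / a (r + 1) * ?W"
      by (simp only: sum_distrib_left[symmetric]) (simp add: sum.atLeast1_atMost_eq)
    also have "\<dots> = ?S $$ (r, c) * (?c * ?W)"
      using S_mat_index_last[of r n a] r nonzero ar \<open>0 < n\<close> unfolding c_last by simp
    finally show ?thesis
      unfolding SD_index using c_last by simp
  qed
qed (simp_all add: Sigma_mat_def S_mat_def D_mat_def)

lemma S_inv_mat_index:
  fixes a :: "nat \<Rightarrow> real"
  assumes nonzero: "\<And>i. 1 \<le> i \<Longrightarrow> i \<le> n \<Longrightarrow> a i \<noteq> 0" and r: "r < n" and c: "c < n"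
  defines "b \<equiv> \<Sum>k\<in>{1..n}. \<Prod>l\<in>{1..n} - {k}. (a l)^2"
    and "P \<equiv> \<Prod>k\<in>{1..n}. (a k)^2"
    and "W \<equiv> \<Sum>i\<in>{1..n}. 1 / (a i)^2"
  shows "S_inv_mat n a b P $$ (r, c)
           = 1 / (W * a (if r + 1 < n then r + 2 else n) * a (c + 1))
             - (if r + 1 < n \<and> c = r + 1 then 1 else 0)"
proof -
  have P: "P \<noteq> 0" unfolding P_def using nonzero by simp
  have W: "W > 0" unfolding W_def using nonzero r by (intro sum_pos) auto
  have b: "b = P * W"
    unfolding b_def P_def W_def using sum_prod_diff1[of "{1..n}" "\<lambda>l. (a l)^2"] nonzero by simp
  have "a (c + 1) \<noteq> 0" "a n \<noteq> 0" using nonzero c by auto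
  consider (last) "r + 1 = n" | (super) "r + 1 < n" "c = r + 1" | (other) "r + 1 < n" "c \<noteq> r + 1"
    using r by linarith
  then show ?thesis
  proof cases
    case last
    then show ?thesis
      using P W c \<open>a (c + 1) \<noteq> 0\<close> \<open>a n \<noteq> 0\<close> by (simp add: S_inv_mat_def Let_def b field_simps)
  next
    case other
    have "a (r + 2) \<noteq> 0" using nonzero other by simp
    then show ?thesis
      using other P W c \<open>a (c + 1) \<noteq> 0\<close>
      by (simp add: S_inv_mat_def Let_def b field_simps numeral_2_eq_2)
  next
    case super
    have ar: "a (r + 2) \<noteq> 0" using nonzero super by simp
    have "S_inv_mat n a b P $$ (r, c)
            = - (\<Sum>k\<in>{1..n} - {r + 2}. (a (r + 2))^2 * (\<Prod>l\<in>{1..n} - {k, r + 2}. (a l)^2)) / b"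
      using super by (simp add: S_inv_mat_def Let_def numeral_2_eq_2)
    also have "\<dots> = - (P * (W - 1 / (a (r + 2))^2)) / b"
      unfolding P_def W_def using sum_prod_diff2[of "{1..n}" "r + 2" "\<lambda>l. (a l)^2"] nonzero super
      by simp
    also have "\<dots> = 1 / (W * a (r + 2) * a (r + 2)) - 1"
      using P W ar by (simp add: b field_simps power2_eq_square)
    finally show ?thesis
      using super by (simp add: numeral_2_eq_2)
  qed
qed

lemma S_inv_mat_mult_S_mat:
  fixes a :: "nat \<Rightarrow> real"
  assumes nonzero: "\<And>i. 1 \<le> i \<Longrightarrow> i \<le> n \<Longrightarrow> a i \<noteq> 0"
  defines "b \<equiv> \<Sum>k\<in>{1..n}. \<Prod>l\<in>{1..n} - {k}. (a l)^2"
    and "P \<equiv> \<Prod>k\<in>{1..n}. (a k)^2"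
  shows "S_inv_mat n a b P * S_mat n a = 1\<^sub>m n" (is "?T * ?S = _")
proof (rule eq_matI)
  define W where "W = (\<Sum>i\<in>{1..n}. 1 / (a i)^2)"
  define g where "g r = (if r + 1 < n then r + 2 else n)" for r
  have carrier: "?T \<in> carrier_mat n n" "?S \<in> carrier_mat n n"
    by (simp_all add: S_inv_mat_def S_mat_def)
  fix r c
  assume "r < dim_row (1\<^sub>m n :: real mat)" and "c < dim_col (1\<^sub>m n :: real mat)"
  then have r: "r < n" and c: "c < n" by simp_all
  have T: "?T $$ (r, j) = 1 / (W * a (g r) * a (j + 1)) - (if r + 1 < n \<and> j = r + 1 then 1 else 0)"
    if "j < n" for j
    unfolding b_def P_def W_def g_def using nonzero r that by (rule S_inv_mat_index)
  have W: "W > 0" unfolding W_def using nonzero r by (intro sum_pos) auto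
  have ag: "a (g r) \<noteq> 0" using nonzero r by (simp add: g_def)
  have W_shift: "W = (\<Sum>j<n. 1 / (a (j + 1))^2)"
    unfolding W_def by (simp add: sum.atLeast1_atMost_eq)
  show "(?T * ?S) $$ (r, c) = 1\<^sub>m n $$ (r, c)"
  proof (cases "c + 1 < n")
    case True
    have "a 1 \<noteq> 0" "a (c + 2) \<noteq> 0" using nonzero True by auto
    have "(?T * ?S) $$ (r, c) = ?T $$ (r, 0) * (a 1 / a (c + 2)) - ?T $$ (r, c + 1)"
      using carrier(1) r True by (rule mult_S_mat_index_lt)
    also have "\<dots> = (if r + 1 < n \<and> c = r then 1 else 0)"
      using True W ag \<open>a 1 \<noteq> 0\<close> \<open>a (c + 2) \<noteq> 0\<close> by (simp add: T field_simps)
    finally show ?thesis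
      using r c True by auto
  next
    case False
    then have c_last: "c = n - 1" using c by simp
    have "(?T * ?S) $$ (r, c) = (\<Sum>j<n. ?T $$ (r, j) * (a n / a (j + 1)))"
      unfolding c_last using carrier(1) r nonzero by (intro mult_S_mat_index_last) auto
    also have "\<dots> = (\<Sum>j<n. a n / (W * a (g r)) * (1 / (a (j + 1))^2)
                           - (if j = r + 1 then a n / a (r + 2) else 0))"
      using nonzero W ag by (intro sum.cong) (auto simp: T field_simps power2_eq_square)
    also have "\<dots> = a n / (W * a (g r)) * W - (if r + 1 < n then a n / a (r + 2) else 0)"
      by (simp only: sum_subtractf sum_distrib_left[symmetric] W_shift[symmetric]) simp
    also have "\<dots> = 1\<^sub>m n $$ (r, c)"
      using W ag nonzero r c_last by (auto simp: g_def)
    finally show ?thesis .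
  qed
qed (simp_all add: S_inv_mat_def S_mat_def)

theorem corollary5p4:
  fixes d n :: nat and V :: real and \<tau> :: "nat \<Rightarrow> real"
  assumes "d \<ge> 1" and "n \<ge> 2" and "V > 0"
    and "- real d / 2 < \<tau> 1"
    and "\<And>i. 1 \<le> i \<Longrightarrow> i < n \<Longrightarrow> \<tau> i < \<tau> (i + 1)"
  defines "a \<equiv> (\<lambda>i. \<tau> i + real d)"
  defines "b \<equiv> (\<Sum>k\<in>{1..n}. \<Prod>l\<in>{1..n} - {k}. (a l)^2)"
  defines "P \<equiv> (\<Prod>k\<in>{1..n}. (a k)^2)"
  defines "lam1 \<equiv> (0::real)"
  defines "lam2 \<equiv> V * (real d)^2 * (unit_ball_vol (real d))^2 * (\<Sum>i\<in>{1..n}. 1 / (a i)^2)"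
  defines "\<Sigma> \<equiv> Sigma_mat n V d a"
  defines "D \<equiv> D_mat n lam1 lam2"
  defines "S \<equiv> S_mat n a"
  defines "Sinv \<equiv> S_inv_mat n a b P"
  shows "invertible_mat S \<and> inverts_mat S Sinv \<and> inverts_mat Sinv S
         \<and> similar_mat \<Sigma> D \<and> D = Sinv * \<Sigma> * S"
proof -
  have nonzero: "a i \<noteq> 0" if "1 \<le> i" "i \<le> n" for i
    using ge_first_if_increasing[of n \<tau> i] assms(4,5) that unfolding a_def by fastforce
  have carrier: "\<Sigma> \<in> carrier_mat n n" "D \<in> carrier_mat n n" "S \<in> carrier_mat n n" "Sinv \<in> carrier_mat n n"
    by (simp_all add: \<Sigma>_def Sigma_mat_def D_def D_mat_def S_def S_mat_def Sinv_def S_inv_mat_def)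
  have left_inverse: "Sinv * S = 1\<^sub>m n"
    unfolding Sinv_def S_def b_def P_def using nonzero by (rule S_inv_mat_mult_S_mat)
  have eigen: "\<Sigma> * S = S * D"
    unfolding \<Sigma>_def S_def D_def lam1_def lam2_def using nonzero by (rule Sigma_mat_mult_S_mat)
  note similar = similar_mat_wit_if_left_inverse[OF carrier left_inverse eigen]
  show ?thesis
    using left_inverse_imp_invertible_mat[OF carrier(3,4) left_inverse] similar
    unfolding similar_mat_def by auto
qed

end
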